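(* Let $C_m$ denote the (unweighted) cycle on $m$ vertices. Then $\mathrm{OPT}(C_m)=m\log_2 m+O(m)$.
   Context: For a graph $G=(V,E)$ with unit edge weights, a hierarchical clustering tree (HC-tree) is a rooted tree whose leaves are in bijection with $V$; its cost is $C_G(\mathcal T)=\sum_{(u,v)\in E}|\mathrm{leaves}(\mathcal T[u\vee v])|$, where $u\vee v$ is the lowest common ancestor of $u,v$ in $\mathcal T$ and $\mathrm{leaves}(\mathcal T[z])$ is the set of leaves of the subtree rooted at $z$. $\mathrm{OPT}(G)$ is the minimum cost over all HC-trees of $G$. *)

theory Defs
  imports Complex_Main "HOL-Library.Landau_Symbols"
begin

datatype 'a hctree = Leaf 'a | Node "'a hctree list"

fun leaves :: "'a hctree \<Rightarrow> 'a list" where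
  "leaves (Leaf x) = [x]"
| "leaves (Node ts) = concat (map leaves ts)"

fun wf_hctree :: "'a hctree \<Rightarrow> bool" where
  "wf_hctree (Leaf x) = True"
| "wf_hctree (Node ts) = (ts \<noteq> [] \<and> (\<forall>t\<in>set ts. wf_hctree t))"

fun subtrees :: "'a hctree \<Rightarrow> 'a hctree set" where
  "subtrees (Leaf x) = {Leaf x}"
| "subtrees (Node ts) = insert (Node ts) (\<Union>t\<in>set ts. subtrees t)"

definition hc_tree :: "'a set \<Rightarrow> 'a hctree \<Rightarrow> bool" where
  "hc_tree V T \<longleftrightarrow> wf_hctree T \<and> distinct (leaves T) \<and> set (leaves T) = V"

text \<open>Number of leaves of the subtree rooted at the lowest common ancestor of the
  endpoints of edge e: the smallest subtree whose leaves contain e.\<close>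
definition lca_leaves :: "'a hctree \<Rightarrow> 'a set \<Rightarrow> nat" where
  "lca_leaves T e = Min {length (leaves t) | t. t \<in> subtrees T \<and> e \<subseteq> set (leaves t)}"

text \<open>Edges are unordered pairs {u,v}; unit weights.\<close>
definition hc_cost :: "'a set set \<Rightarrow> 'a hctree \<Rightarrow> nat" where
  "hc_cost E T = (\<Sum>e\<in>E. lca_leaves T e)"

definition OPT :: "'a set \<Rightarrow> 'a set set \<Rightarrow> nat" where
  "OPT V E = Inf {hc_cost E T | T. hc_tree V T}"

definition cycle_vertices :: "nat \<Rightarrow> nat set" where
  "cycle_vertices m = {0..<m}"

definition cycle_edges :: "nat \<Rightarrow> nat set set" where
  "cycle_edges m = {{i, (i + 1) mod m} | i. i < m}"

end

theory Submission
  imports Defs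
begin

text \<open>Lower bound: in any HC-tree, let \<open>T'\<close> be the smallest subtree containing a path segment of
  \<open>n\<close> vertices. Some edge of the segment joins two different children of \<open>T'\<close>, so it costs at least
  \<open>n\<close> and splits the segment into pieces of sizes \<open>p + q = n\<close>; recursing and using
  \<open>n log n \<le> p log p + q log q + n\<close> gives cost at least \<open>m log m\<close> already for the path inside \<open>C\<^sub>m\<close>.
  Upper bound: the balanced bisection tree pays at most \<open>m\<close> per level for the path edges and at
  most \<open>m\<close> for the closing edge, i.e. at most \<open>m \<lceil>log m\<rceil> + m\<close>.\<close>

lemma finite_subtrees: "finite (subtrees T)"
  by (induction T) auto

lemma subtrees_refl: "T \<in> subtrees T"
  by (cases T) auto

lemma subtrees_trans: "t \<in> subtrees T \<Longrightarrow> subtrees t \<subseteq> subtrees T"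
  by (induction T) auto

lemma leaves_subtree_subset: "t \<in> subtrees T \<Longrightarrow> set (leaves t) \<subseteq> set (leaves T)"
  by (induction T) auto

lemma subtrees_Node_cases:
  assumes "s \<in> subtrees (Node ts)"
  obtains "s = Node ts" | t where "t \<in> set ts" "s \<in> subtrees t"
  using assms by auto

lemma distinct_leaves_child:
  "distinct (concat (map leaves ts)) \<Longrightarrow> t \<in> set ts \<Longrightarrow> distinct (leaves t)"
  by (induction ts) auto

lemma child_eq_if_common_leaf:
  "distinct (concat (map leaves ts)) \<Longrightarrow> t \<in> set ts \<Longrightarrow> t' \<in> set ts
   \<Longrightarrow> x \<in> set (leaves t) \<Longrightarrow> x \<in> set (leaves t') \<Longrightarrow> t = t'"
  by (induction ts) auto

lemma lca_leaves_le:
  assumes "t \<in> subtrees T" "e \<subseteq> set (leaves t)"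
  shows "lca_leaves T e \<le> length (leaves t)"
  unfolding lca_leaves_def using assms finite_subtrees[of T] by (intro Min_le) auto

lemma lca_leaves_attained:
  assumes "e \<subseteq> set (leaves T)"
  obtains t where "t \<in> subtrees T" "e \<subseteq> set (leaves t)" "lca_leaves T e = length (leaves t)"
proof -
  have "lca_leaves T e \<in> {length (leaves t) | t. t \<in> subtrees T \<and> e \<subseteq> set (leaves t)}"
    unfolding lca_leaves_def using assms finite_subtrees[of T] subtrees_refl[of T]
    by (intro Min_in) auto
  then show ?thesis using that by blast
qed

lemma lca_leaves_le_length: "e \<subseteq> set (leaves T) \<Longrightarrow> lca_leaves T e \<le> length (leaves T)"
  by (rule lca_leaves_le[OF subtrees_refl])

lemma lca_leaves_le_subtree:
  assumes "t \<in> subtrees T" "e \<subseteq> set (leaves t)"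
  shows "lca_leaves T e \<le> lca_leaves t e"
proof -
  obtain s where s: "s \<in> subtrees t" "e \<subseteq> set (leaves s)" "lca_leaves t e = length (leaves s)"
    using lca_leaves_attained[OF assms(2)] .
  have "s \<in> subtrees T" using s(1) subtrees_trans[OF assms(1)] by blast
  then show ?thesis using lca_leaves_le[OF _ s(2)] s(3) by simp
qed

text \<open>The number of leaves in \<open>I\<close> below the LCA of \<open>e\<close> (the subtrees containing \<open>e\<close> form a chain).
  Counting only leaves of a segment \<open>I\<close> is what lets the lower bound recurse on sub-segments.\<close>
definition lca_leaves_in :: "'a hctree \<Rightarrow> 'a set \<Rightarrow> 'a set \<Rightarrow> nat" where
  "lca_leaves_in T I e =
     Min ((\<lambda>t. card (set (leaves t) \<inter> I)) ` {t \<in> subtrees T. e \<subseteq> set (leaves t)})"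

lemma lca_leaves_in_le:
  assumes "t \<in> subtrees T" "e \<subseteq> set (leaves t)"
  shows "lca_leaves_in T I e \<le> card (set (leaves t) \<inter> I)"
  unfolding lca_leaves_in_def using assms finite_subtrees[of T] by (intro Min_le) auto

lemma lca_leaves_in_attained:
  assumes "e \<subseteq> set (leaves T)"
  obtains t where "t \<in> subtrees T" "e \<subseteq> set (leaves t)"
    "lca_leaves_in T I e = card (set (leaves t) \<inter> I)"
proof -
  have "lca_leaves_in T I e \<in> (\<lambda>t. card (set (leaves t) \<inter> I)) ` {t \<in> subtrees T. e \<subseteq> set (leaves t)}"
    unfolding lca_leaves_in_def using assms finite_subtrees[of T] subtrees_refl[of T]
    by (intro Min_in) auto
  then show ?thesis using that by blast
qed

lemma lca_leaves_in_le_lca_leaves: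
  assumes "e \<subseteq> set (leaves T)"
  shows "lca_leaves_in T I e \<le> lca_leaves T e"
proof -
  obtain t where t: "t \<in> subtrees T" "e \<subseteq> set (leaves t)" "lca_leaves T e = length (leaves t)"
    using lca_leaves_attained[OF assms] .
  have "lca_leaves_in T I e \<le> card (set (leaves t) \<inter> I)"
    using lca_leaves_in_le[OF t(1,2)] .
  also have "\<dots> \<le> card (set (leaves t))" by (intro card_mono) auto
  also have "\<dots> \<le> length (leaves t)" by (rule card_length)
  finally show ?thesis using t(3) by simp
qed

lemma lca_leaves_in_mono:
  assumes "e \<subseteq> set (leaves T)" "J \<subseteq> I"
  shows "lca_leaves_in T J e \<le> lca_leaves_in T I e"
proof -
  obtain t where t: "t \<in> subtrees T" "e \<subseteq> set (leaves t)"
    "lca_leaves_in T I e = card (set (leaves t) \<inter> I)"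
    using lca_leaves_in_attained[OF assms(1)] .
  have "lca_leaves_in T J e \<le> card (set (leaves t) \<inter> J)"
    using lca_leaves_in_le[OF t(1,2)] .
  also have "\<dots> \<le> card (set (leaves t) \<inter> I)"
    using assms(2) by (intro card_mono) auto
  finally show ?thesis using t(3) by simp
qed

lemma sum_lca_leaves_in_mono:
  assumes "\<And>i. i \<in> A \<Longrightarrow> {i, Suc i} \<subseteq> set (leaves T)" "J \<subseteq> I"
  shows "(\<Sum>i\<in>A. real (lca_leaves_in T J {i, Suc i})) \<le> (\<Sum>i\<in>A. real (lca_leaves_in T I {i, Suc i}))"
  using assms by (intro sum_mono) (simp add: lca_leaves_in_mono)

lemma card_le_lca_leaves_in:
  assumes "e \<subseteq> set (leaves T)"
    and "\<And>t. t \<in> subtrees T \<Longrightarrow> e \<subseteq> set (leaves t) \<Longrightarrow> I \<subseteq> set (leaves t)"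
  shows "card I \<le> lca_leaves_in T I e"
proof -
  obtain t where t: "t \<in> subtrees T" "e \<subseteq> set (leaves t)"
    "lca_leaves_in T I e = card (set (leaves t) \<inter> I)"
    using lca_leaves_in_attained[OF assms(1)] .
  then have "set (leaves t) \<inter> I = I" using assms(2) by blast
  then show ?thesis using t(3) by simp
qed

lemma interval_in_block_if_no_crossing:
  fixes P :: "nat set set"
  assumes "pairwise disjnt P" "A \<in> P" "a \<in> A"
    and "\<And>k. a < k \<Longrightarrow> k < a + n \<Longrightarrow> \<exists>B\<in>P. {k - 1, k} \<subseteq> B"
  shows "{a..<a + n} \<subseteq> A"
proof -
  have "a + j \<in> A" if "j < n" for j
    using that
  proof (induction j)
    case (Suc j)
    then obtain B where "B \<in> P" "{a + j, a + Suc j} \<subseteq> B"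
      using assms(4)[of "a + Suc j"] by auto
    with Suc assms(1,2) show ?case
      by (metis disjnt_iff insert_subset pairwise_def Suc_lessD)
  qed (use assms(3) in simp)
  then show ?thesis
    by (metis atLeastLessThan_iff le_Suc_ex nat_add_left_cancel_less subsetI)
qed

lemma segment_has_covering_edge:
  fixes T :: "nat hctree"
  assumes "wf_hctree T" "distinct (leaves T)" "{a..<a+n} \<subseteq> set (leaves T)" "2 \<le> n"
  shows "\<exists>k. a < k \<and> k < a + n \<and>
    (\<forall>t\<in>subtrees T. {k - 1, k} \<subseteq> set (leaves t) \<longrightarrow> {a..<a+n} \<subseteq> set (leaves t))"
  using assms
proof (induction T)
  case (Leaf x)
  then have "a \<in> {x}" "Suc a \<in> {x}" by (auto dest: subsetD[of _ _ a] subsetD[of _ _ "Suc a"])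
  then show ?case by simp
next
  case (Node ts)
  let ?I = "{a..<a+n}"
  have dist: "distinct (concat (map leaves ts))" using Node.prems by simp
  show ?case
  proof (cases "\<exists>t\<in>set ts. ?I \<subseteq> set (leaves t)")
    case True
    then obtain t where t: "t \<in> set ts" "?I \<subseteq> set (leaves t)" by blast
    have "wf_hctree t" using Node.prems(1) t(1) by simp
    then obtain k where k: "a < k" "k < a + n"
      "\<forall>s\<in>subtrees t. {k - 1, k} \<subseteq> set (leaves s) \<longrightarrow> ?I \<subseteq> set (leaves s)"
      using Node.IH[OF t(1) _ distinct_leaves_child[OF dist t(1)] t(2) Node.prems(4)] by blast
    have "?I \<subseteq> set (leaves s)"
      if s: "s \<in> subtrees (Node ts)" "{k - 1, k} \<subseteq> set (leaves s)" for s
      using s(1)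
    proof (cases rule: subtrees_Node_cases)
      case (2 t')
      have "k \<in> set (leaves t')" "k \<in> set (leaves t)"
        using leaves_subtree_subset[OF 2(2)] s(2) t(2) k(1,2) by auto
      then have "t' = t" using child_eq_if_common_leaf[OF dist 2(1) t(1)] by blast
      then show ?thesis using k(3) 2(2) s(2) by blast
    qed (use Node.prems(3) in simp)
    then show ?thesis using k(1,2) by blast
  next
    case False
    have "a \<in> ?I" using Node.prems(4) by simp
    then have "a \<in> set (leaves (Node ts))" using Node.prems(3) by blast
    then obtain t0 where t0: "t0 \<in> set ts" "a \<in> set (leaves t0)" by auto
    have disj: "pairwise disjnt ((\<lambda>t. set (leaves t)) ` set ts)"
    proof (rule pairwise_imageI)
      fix t t' assume "t \<in> set ts" "t' \<in> set ts" "t \<noteq> t'"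
      then show "disjnt (set (leaves t)) (set (leaves t'))"
        unfolding disjnt_iff using child_eq_if_common_leaf[OF dist] by blast
    qed
    have "\<not> (\<forall>k. a < k \<and> k < a + n \<longrightarrow> (\<exists>t\<in>set ts. {k - 1, k} \<subseteq> set (leaves t)))"
    proof
      assume "\<forall>k. a < k \<and> k < a + n \<longrightarrow> (\<exists>t\<in>set ts. {k - 1, k} \<subseteq> set (leaves t))"
      then have "?I \<subseteq> set (leaves t0)"
        by (intro interval_in_block_if_no_crossing[OF disj imageI[OF t0(1)] t0(2)]) auto
      then show False using False t0(1) by blast
    qed
    then obtain k where k: "a < k" "k < a + n" "\<forall>t\<in>set ts. \<not> {k - 1, k} \<subseteq> set (leaves t)"
      by auto
    have "?I \<subseteq> set (leaves s)"
      if s: "s \<in> subtrees (Node ts)" "{k - 1, k} \<subseteq> set (leaves s)" for s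
      using s(1)
    proof (cases rule: subtrees_Node_cases)
      case (2 t')
      then show ?thesis using leaves_subtree_subset[OF 2(2)] s(2) k(3) by blast
    qed (use Node.prems(3) in simp)
    then show ?thesis using k(1,2) by blast
  qed
qed

lemma sum_atLeastLessThan_split_at:
  fixes f :: "nat \<Rightarrow> 'b::comm_monoid_add"
  assumes "a < k" "k \<le> b"
  shows "(\<Sum>i\<in>{a..<b}. f i) = (\<Sum>i\<in>{a..<k-1}. f i) + f (k - 1) + (\<Sum>i\<in>{k..<b}. f i)"
proof -
  have "(\<Sum>i\<in>{a..<b}. f i) = (\<Sum>i\<in>{a..<k-1}. f i) + (\<Sum>i\<in>{k-1..<b}. f i)"
    using assms by (intro sum.atLeastLessThan_concat[symmetric]) auto
  also have "(\<Sum>i\<in>{k-1..<b}. f i) = f (k - 1) + (\<Sum>i\<in>{Suc (k-1)..<b}. f i)"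
    using assms by (intro sum.atLeast_Suc_lessThan) auto
  finally show ?thesis using assms by (simp add: add.assoc)
qed

lemma entropy_bound:
  fixes p q :: real
  assumes "p > 0" "q > 0"
  shows "(p + q) * log 2 (p + q) \<le> p * log 2 p + q * log 2 q + (p + q)"
proof -
  define n where "n = p + q"
  have n: "n > 0" using assms n_def by simp
  have half: "x * (ln n - ln 2 - ln x) \<le> n / 2 - x" if "x > 0" for x
  proof -
    have "ln (n / (2 * x)) \<le> n / (2 * x) - 1" using n that by (intro ln_le_minus_one) simp
    moreover have "ln (n / (2 * x)) = ln n - ln 2 - ln x" using n that by (simp add: ln_div ln_mult)
    ultimately have "x * (ln n - ln 2 - ln x) \<le> x * (n / (2 * x) - 1)"
      using that by (intro mult_left_mono) auto
    also have "\<dots> = n / 2 - x" using that by (simp add: field_simps)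
    finally show ?thesis .
  qed
  have "n * ln n \<le> p * ln p + q * ln q + n * ln 2"
    using half[OF assms(1)] half[OF assms(2)] n_def by (simp add: algebra_simps)
  then have "n * ln n / ln 2 \<le> (p * ln p + q * ln q + n * ln 2) / ln 2"
    by (simp add: divide_right_mono)
  then show ?thesis unfolding n_def[symmetric] log_def by (simp add: add_divide_distrib)
qed

lemma path_cost_lower_bound:
  fixes T :: "nat hctree"
  assumes "wf_hctree T" "distinct (leaves T)" "{a..<a+n} \<subseteq> set (leaves T)"
  shows "real n * log 2 (real n) \<le> (\<Sum>i\<in>{a..<a+n-1}. real (lca_leaves_in T {a..<a+n} {i, Suc i}))"
  using assms(3)
proof (induction n arbitrary: a rule: less_induct)
  case (less n)
  let ?I = "{a..<a+n}"
  let ?g = "\<lambda>I i. real (lca_leaves_in T I {i, Suc i})"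
  show ?case
  proof (cases "n \<le> 1")
    case True
    then have "n = 0 \<or> n = 1" by auto
    then show ?thesis by auto
  next
    case False
    obtain k where k: "a < k" "k < a + n"
      and covers: "\<forall>t\<in>subtrees T. {k - 1, k} \<subseteq> set (leaves t) \<longrightarrow> ?I \<subseteq> set (leaves t)"
      using segment_has_covering_edge[OF assms(1,2) less.prems] False by auto
    define p q where "p = k - a" and "q = a + n - k"
    have pq: "k = a + p" "n = p + q" "0 < p" "0 < q" using k unfolding p_def q_def by auto
    have parts: "{a..<a+p} \<subseteq> set (leaves T)" "{a+p..<a+p+q} \<subseteq> set (leaves T)"
      using less.prems pq(2) by auto
    have edges: "\<And>i. i \<in> {a..<a+p-1} \<Longrightarrow> {i, Suc i} \<subseteq> set (leaves T)"
      "\<And>i. i \<in> {a+p..<a+n-1} \<Longrightarrow> {i, Suc i} \<subseteq> set (leaves T)"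
      using less.prems pq by auto
    have "{k - 1, k} \<subseteq> ?I" using k by auto
    then have "{k - 1, k} \<subseteq> set (leaves T)" using less.prems by (rule subset_trans)
    then have "real n \<le> ?g ?I (k - 1)"
      using card_le_lca_leaves_in[of "{k - 1, k}" T ?I] covers k by auto
    moreover have "real p * log 2 (real p) \<le> (\<Sum>i\<in>{a..<a+p-1}. ?g ?I i)"
      using order_trans[OF less.IH[OF _ parts(1)] sum_lca_leaves_in_mono[OF edges(1)]] pq by auto
    moreover have "real q * log 2 (real q) \<le> (\<Sum>i\<in>{a+p..<a+n-1}. ?g ?I i)"
      using order_trans[OF less.IH[OF _ parts(2)] sum_lca_leaves_in_mono[OF edges(2)]] pq
      by (auto simp: add.assoc)
    moreover have "real n * log 2 (real n) \<le> real p * log 2 (real p) + real q * log 2 (real q) + real n"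
      using entropy_bound[of "real p" "real q"] pq by (simp flip: of_nat_add)
    ultimately show ?thesis
      using sum_atLeastLessThan_split_at[of a k "a + n - 1" "?g ?I"] k pq(1) by simp
  qed
qed

text \<open>For \<open>n \<le> 1\<close> the result is \<open>Leaf a\<close>, so for \<open>n = 0\<close> it is not an HC-tree of \<open>{}\<close>.\<close>
function balanced_hctree :: "nat \<Rightarrow> nat \<Rightarrow> nat hctree" where
  "balanced_hctree a n =
     (if n \<le> 1 then Leaf a
      else Node [balanced_hctree a (n div 2), balanced_hctree (a + n div 2) (n - n div 2)])"
  by pat_completeness auto
termination by (relation "measure snd") auto

declare balanced_hctree.simps[simp del]

lemma balanced_hctree_split:
  "\<not> n \<le> 1 \<Longrightarrow> balanced_hctree a n =
     Node [balanced_hctree a (n div 2), balanced_hctree (a + n div 2) (n - n div 2)]"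
  by (simp add: balanced_hctree.simps)

lemma leaves_balanced_hctree: "n \<ge> 1 \<Longrightarrow> leaves (balanced_hctree a n) = [a..<a+n]"
proof (induction a n rule: balanced_hctree.induct)
  case (1 a n)
  show ?case
  proof (cases "n \<le> 1")
    case True
    with 1 show ?thesis by (simp add: balanced_hctree.simps)
  next
    case False
    then have "leaves (balanced_hctree a n) =
        [a..<a + n div 2] @ [a + n div 2..<a + n div 2 + (n - n div 2)]"
      using 1 by (simp add: balanced_hctree_split)
    also have "\<dots> = [a..<a + n div 2 + (n - n div 2)]"
      by (rule upt_add_eq_append[symmetric]) simp
    finally show ?thesis by simp
  qed
qed

lemma wf_balanced_hctree: "wf_hctree (balanced_hctree a n)"
  by (induction a n rule: balanced_hctree.induct) (subst balanced_hctree.simps, auto)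

lemma hc_tree_balanced_hctree: "n \<ge> 1 \<Longrightarrow> hc_tree {a..<a+n} (balanced_hctree a n)"
  unfolding hc_tree_def by (simp add: leaves_balanced_hctree wf_balanced_hctree)

lemma hc_tree_cycle_balanced_hctree: "m \<ge> 1 \<Longrightarrow> hc_tree (cycle_vertices m) (balanced_hctree 0 m)"
  using hc_tree_balanced_hctree[of m 0] by (simp add: cycle_vertices_def)

lemma balanced_hctree_path_cost:
  "n \<le> 2 ^ k \<Longrightarrow> (\<Sum>i\<in>{a..<a+n-1}. lca_leaves (balanced_hctree a n) {i, Suc i}) \<le> n * k"
proof (induction k arbitrary: a n)
  case (Suc k)
  show ?case
  proof (cases "n \<le> 1")
    case False
    define h where "h = n div 2"
    define L where "L = balanced_hctree a h"
    define R where "R = balanced_hctree (a + h) (n - h)"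
    let ?T = "balanced_hctree a n"
    let ?f = "\<lambda>i. lca_leaves ?T {i, Suc i}"
    have h: "1 \<le> h" "h < n" "h \<le> 2 ^ k" "n - h \<le> 2 ^ k"
      using False Suc.prems h_def by auto
    have T: "?T = Node [L, R]" using False by (simp add: balanced_hctree_split L_def R_def h_def)
    have "(\<Sum>i\<in>{a..<a+h-1}. ?f i) \<le> (\<Sum>i\<in>{a..<a+h-1}. lca_leaves L {i, Suc i})"
      using h by (intro sum_mono lca_leaves_le_subtree) (auto simp: T L_def leaves_balanced_hctree subtrees_refl)
    also have "\<dots> \<le> h * k" using Suc.IH h by (simp add: L_def)
    finally have left: "(\<Sum>i\<in>{a..<a+h-1}. ?f i) \<le> h * k" .
    have "(\<Sum>i\<in>{a+h..<a+n-1}. ?f i) \<le> (\<Sum>i\<in>{a+h..<a+n-1}. lca_leaves R {i, Suc i})"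
      using h by (intro sum_mono lca_leaves_le_subtree) (auto simp: T R_def leaves_balanced_hctree subtrees_refl)
    also have "\<dots> \<le> (n - h) * k" using Suc.IH[of "n - h" "a + h"] h by (simp add: R_def)
    finally have right: "(\<Sum>i\<in>{a+h..<a+n-1}. ?f i) \<le> (n - h) * k" .
    have "?f (a + h - 1) \<le> length (leaves ?T)"
      by (intro lca_leaves_le_length) (use h in \<open>auto simp: leaves_balanced_hctree\<close>)
    then have middle: "?f (a + h - 1) \<le> n"
      using h by (simp add: leaves_balanced_hctree)
    have "(\<Sum>i\<in>{a..<a+n-1}. ?f i) \<le> h * k + n + (n - h) * k"
      using sum_atLeastLessThan_split_at[of a "a + h" "a + n - 1" ?f] h left middle right by simp
    also have "\<dots> = n * Suc k" using h by (simp add: algebra_simps)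
    finally show ?thesis .
  qed auto
qed auto

lemma inj_on_path_edge: "inj_on (\<lambda>i::nat. {i, Suc i}) A"
proof (rule inj_onI)
  fix x y :: nat assume "{x, Suc x} = {y, Suc y}"
  then have "x \<in> {y, Suc y}" "y \<in> {x, Suc x}" by blast+
  then show "x = y" by auto
qed

lemma cycle_edges_eq:
  "m \<ge> 2 \<Longrightarrow> cycle_edges m = insert {m - 1, 0} ((\<lambda>i. {i, Suc i}) ` {0..<m-1})"
  unfolding cycle_edges_def
proof (intro equalityI subsetI)
  fix e assume "m \<ge> 2" "e \<in> {{i, (i + 1) mod m} | i. i < m}"
  then obtain i where "i < m" "e = {i, (i + 1) mod m}" by auto
  then show "e \<in> insert {m - 1, 0} ((\<lambda>i. {i, Suc i}) ` {0..<m-1})"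
    by (cases "i = m - 1") auto
next
  fix e assume m: "m \<ge> 2" and "e \<in> insert {m - 1, 0} ((\<lambda>i. {i, Suc i}) ` {0..<m-1})"
  then consider "e = {m - 1, 0}" | i where "i < m - 1" "e = {i, Suc i}"
    by auto
  then show "e \<in> {{i, (i + 1) mod m} | i. i < m}"
  proof cases
    case 1
    have "{m - 1, 0} = {m - 1, (m - 1 + 1) mod m}" "m - 1 < m" using m by auto
    then show ?thesis using 1 by blast
  next
    case (2 i)
    then have "e = {i, (i + 1) mod m}" "i < m" by auto
    then show ?thesis by blast
  qed
qed

lemma OPT_le: "hc_tree V T \<Longrightarrow> OPT V E \<le> hc_cost E T"
  unfolding OPT_def by (intro cInf_lower) auto

lemma OPT_attained:
  assumes "hc_tree V T0"
  obtains T where "hc_tree V T" "OPT V E = hc_cost E T"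
proof -
  have "OPT V E \<in> {hc_cost E T | T. hc_tree V T}"
    unfolding OPT_def using assms by (intro Inf_nat_def1) auto
  then show ?thesis using that by blast
qed

lemma hc_cost_cycle_ge_path:
  assumes "m \<ge> 2"
  shows "(\<Sum>i\<in>{0..<m-1}. lca_leaves T {i, Suc i}) \<le> hc_cost (cycle_edges m) T"
proof -
  have "(\<Sum>i\<in>{0..<m-1}. lca_leaves T {i, Suc i}) = (\<Sum>e\<in>(\<lambda>i. {i, Suc i}) ` {0..<m-1}. lca_leaves T e)"
    by (simp add: sum.reindex[OF inj_on_path_edge])
  also have "\<dots> \<le> hc_cost (cycle_edges m) T"
    unfolding hc_cost_def cycle_edges_eq[OF assms] by (intro sum_mono2) auto
  finally show ?thesis .
qed

lemma OPT_cycle_lower: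
  assumes "m \<ge> 2"
  shows "real m * log 2 (real m) \<le> real (OPT (cycle_vertices m) (cycle_edges m))"
proof -
  obtain T where T: "hc_tree (cycle_vertices m) T"
      "OPT (cycle_vertices m) (cycle_edges m) = hc_cost (cycle_edges m) T"
    using OPT_attained[OF hc_tree_cycle_balanced_hctree] assms by (metis one_le_numeral order_trans)
  then have leaves: "wf_hctree T" "distinct (leaves T)" "set (leaves T) = {0..<m}"
    unfolding hc_tree_def cycle_vertices_def by auto
  have "real m * log 2 (real m) \<le> (\<Sum>i\<in>{0..<m-1}. real (lca_leaves_in T {0..<m} {i, Suc i}))"
    using path_cost_lower_bound[of T 0 m] leaves by simp
  also have "\<dots> \<le> (\<Sum>i\<in>{0..<m-1}. real (lca_leaves T {i, Suc i}))"
    using leaves by (intro sum_mono) (auto intro: lca_leaves_in_le_lca_leaves)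
  also have "\<dots> \<le> real (hc_cost (cycle_edges m) T)"
    using hc_cost_cycle_ge_path[OF assms, of T] by (simp flip: of_nat_sum)
  finally show ?thesis using T(2) by simp
qed

lemma le_two_power_ceiling_log: "m \<ge> 1 \<Longrightarrow> m \<le> 2 ^ nat \<lceil>log 2 (real m)\<rceil>"
proof -
  assume "m \<ge> 1"
  then have "real m = 2 powr log 2 (real m)" by simp
  also have "\<dots> \<le> 2 powr real (nat \<lceil>log 2 (real m)\<rceil>)"
    by (intro powr_mono) linarith+
  finally show ?thesis by (simp add: powr_realpow flip: of_nat_le_iff)
qed

lemma OPT_cycle_upper:
  assumes "m \<ge> 2"
  shows "real (OPT (cycle_vertices m) (cycle_edges m)) \<le> real m * log 2 (real m) + 2 * real m"
proof -
  define k where "k = nat \<lceil>log 2 (real m)\<rceil>"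
  let ?T = "balanced_hctree 0 m"
  have leaves: "leaves ?T = [0..<m]" using leaves_balanced_hctree[of m 0] assms by simp
  have closing: "lca_leaves ?T {m - 1, 0} \<le> m"
    using lca_leaves_le_length[of "{m - 1, 0}" ?T] leaves assms by simp
  have path: "(\<Sum>i\<in>{0..<m-1}. lca_leaves ?T {i, Suc i}) \<le> m * k"
    using balanced_hctree_path_cost[OF le_two_power_ceiling_log, of m 0] assms unfolding k_def by simp
  have "OPT (cycle_vertices m) (cycle_edges m) \<le> hc_cost (cycle_edges m) ?T"
    using OPT_le[OF hc_tree_cycle_balanced_hctree] assms by simp
  also have "\<dots> \<le> lca_leaves ?T {m - 1, 0} + (\<Sum>i\<in>{0..<m-1}. lca_leaves ?T {i, Suc i})"
    unfolding hc_cost_def cycle_edges_eq[OF assms]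
    by (simp add: sum.insert_if sum.reindex[OF inj_on_path_edge])
  also have "\<dots> \<le> m + m * k" using closing path by (rule add_mono)
  finally have OPT_le_k: "real (OPT (cycle_vertices m) (cycle_edges m)) \<le> real m + real m * real k"
    by (metis of_nat_add of_nat_le_iff of_nat_mult)
  have "log 2 (real m) \<ge> 0" using assms by simp
  then have "real k \<le> log 2 (real m) + 1"
    unfolding k_def by linarith
  from mult_left_mono[OF this, of "real m"]
  have "real m * real k \<le> real m * log 2 (real m) + real m"
    by (simp add: algebra_simps)
  then show ?thesis using OPT_le_k by linarith
qed

theorem lemma2p4:
  shows "(\<lambda>m. real (OPT (cycle_vertices m) (cycle_edges m)) - real m * log 2 (real m))
           \<in> O(\<lambda>m. real m)"
proof (rule bigoI[where c = 2])
  have "\<bar>real (OPT (cycle_vertices m) (cycle_edges m)) - real m * log 2 (real m)\<bar> \<le> 2 * real m"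
    if "m \<ge> 2" for m
    using OPT_cycle_lower[OF that] OPT_cycle_upper[OF that] by linarith
  then show "\<forall>\<^sub>F m in at_top. norm (real (OPT (cycle_vertices m) (cycle_edges m))
      - real m * log 2 (real m)) \<le> 2 * norm (real m)"
    unfolding eventually_at_top_linorder by auto
qed

end
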